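(* If $G$ is an infinite $2$-edge-connected graph, then $G$ is cat-win.
   Context: Cat Herding is played on a simple, possibly infinite graph $G$. The cat first places its token on a vertex. Then the players alternate, the herder moving first: the herder deletes one edge of the current graph, and then, unless the cat's current vertex has degree $0$ in the current graph, the cat moves its token along a finite path with at least one edge in the current graph to a different vertex. The cat is captured when its vertex has degree $0$ in the current graph. $G$ is cat-win if the cat has a strategy that is never captured, and herder-win if the herder has a strategy that eventually captures the cat. A graph is $2$-edge-connected if every pair of vertices is joined by at least $2$ edge-disjoint finite paths (equivalently, it is connected and has no disconnecting set of fewer than $2$ edges). *)

theory Defs
  imports Main
begin

definition simple_graph :: "'a set \<Rightarrow> 'a set set \<Rightarrow> bool" where
  "simple_graph V E \<longleftrightarrow> (\<forall>e\<in>E. \<exists>u v. e = {u, v} \<and> u \<noteq> v \<and> u \<in> V \<and> v \<in> V)"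

definition is_path :: "'a set set \<Rightarrow> 'a list \<Rightarrow> 'a \<Rightarrow> 'a \<Rightarrow> bool" where
  "is_path F p u w \<longleftrightarrow> length p \<ge> 2 \<and> distinct p \<and> hd p = u \<and> last p = w \<and>
     (\<forall>i. Suc i < length p \<longrightarrow> {p ! i, p ! Suc i} \<in> F)"

definition graph_connected :: "'a set \<Rightarrow> 'a set set \<Rightarrow> bool" where
  "graph_connected V E \<longleftrightarrow> (\<forall>u\<in>V. \<forall>v\<in>V. u \<noteq> v \<longrightarrow> (\<exists>p. is_path E p u v))"

definition two_edge_connected :: "'a set \<Rightarrow> 'a set set \<Rightarrow> bool" where
  "two_edge_connected V E \<longleftrightarrow> graph_connected V E \<and>
     (\<forall>S \<subseteq> E. finite S \<and> card S < 2 \<longrightarrow> graph_connected V (E - S))"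

definition isolated :: "'a set set \<Rightarrow> 'a \<Rightarrow> bool" where
  "isolated F c \<longleftrightarrow> \<not> (\<exists>e\<in>F. c \<in> e)"

text \<open>The herder's play is a sequence h of edges, h n being the edge deleted in
  round n.  A cat strategy consists of a start vertex v0 and a map \<sigma> from the list of herder
  deletions so far (most recent last) to the cat's next vertex (the cat's own moves are
  determined by the strategy, so this is fully general).\<close>

fun cat_pos :: "'a \<Rightarrow> ('a set list \<Rightarrow> 'a) \<Rightarrow> (nat \<Rightarrow> 'a set) \<Rightarrow> nat \<Rightarrow> 'a" where
  "cat_pos v0 \<sigma> h 0 = v0"
| "cat_pos v0 \<sigma> h (Suc n) = \<sigma> (map h [0..<Suc n])"

definition cat_winning_strategy ::
  "'a set \<Rightarrow> 'a set set \<Rightarrow> 'a \<Rightarrow> ('a set list \<Rightarrow> 'a) \<Rightarrow> bool" where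
  "cat_winning_strategy V E v0 \<sigma> \<longleftrightarrow> v0 \<in> V \<and> \<not> isolated E v0 \<and>
     (\<forall>h n. (\<forall>k\<le>n. h k \<in> E - h ` {..<k}) \<longrightarrow>
        (let F = E - h ` {..n}; c = cat_pos v0 \<sigma> h n in
          \<not> isolated F c \<and> (\<exists>p. is_path F p c (cat_pos v0 \<sigma> h (Suc n)))))"

definition cat_win :: "'a set \<Rightarrow> 'a set set \<Rightarrow> bool" where
  "cat_win V E \<longleftrightarrow> (\<exists>v0 \<sigma>. cat_winning_strategy V E v0 \<sigma>)"

end

(*
  The cat only ever stands on safe vertices: v is safe in the current graph F if deleting any
  single edge of F leaves v in an infinite component.  Since G is infinite and 2-edge-connected,
  every vertex is safe at the start; and if the cat is on a safe vertex when the herder deletes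
  an edge, its component is still infinite, so it suffices that all but finitely many vertices
  of an infinite component K of E - D are safe, D being the finite set of deleted edges.

  If v in K is unsafe, some edge g of E - D cuts off a finite piece containing v.  As E - {g}
  is connected and V is infinite, both sides of g contain an endpoint of a deleted edge, so g
  lies on every path in E - D between these two endpoints.  There are only finitely many such
  endpoints in K; fixing a finite connecting edge set for each pair of them leaves finitely many
  candidate edges g, each cutting off finitely many vertices.
*)

theory Submission
  imports Defs "HOL-Library.Transitive_Closure_Table"
begin

definition adjacent :: "'a set set \<Rightarrow> 'a \<Rightarrow> 'a \<Rightarrow> bool" where
  "adjacent F x y \<longleftrightarrow> {x, y} \<in> F \<and> x \<noteq> y"

definition component :: "'a set set \<Rightarrow> 'a \<Rightarrow> 'a set" where
  "component F x = {y. (adjacent F)\<^sup>*\<^sup>* x y}"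

lemma self_in_component [simp]: "x \<in> component F x"
  by (simp add: component_def)

lemma component_sym: "y \<in> component F x \<Longrightarrow> x \<in> component F y"
proof -
  have "symp (adjacent F)"
    by (auto intro: sympI simp: adjacent_def insert_commute)
  then show "y \<in> component F x \<Longrightarrow> x \<in> component F y"
    unfolding component_def by (auto dest: sympD[OF symp_rtranclp])
qed

lemma component_trans: "y \<in> component F x \<Longrightarrow> z \<in> component F y \<Longrightarrow> z \<in> component F x"
  unfolding component_def by simp

lemma component_eq: "y \<in> component F x \<Longrightarrow> component F y = component F x"
  by (blast intro: component_trans component_sym)

lemma component_mono: "F \<subseteq> F' \<Longrightarrow> component F x \<subseteq> component F' x"
proof -
  assume "F \<subseteq> F'"
  then have "adjacent F \<le> adjacent F'"
    by (auto simp: adjacent_def)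
  then show ?thesis
    unfolding component_def by (auto dest: rtranclp_mono)
qed

lemma component_boundary_edge:
  assumes "y \<in> component F x" and "y \<notin> component F' x"
  obtains a b where "{a, b} \<in> F - F'" "a \<in> component F' x" "b \<notin> component F' x"
proof -
  have "(adjacent F)\<^sup>*\<^sup>* x y"
    using assms(1) by (simp add: component_def)
  then have "\<exists>a b. {a, b} \<in> F - F' \<and> a \<in> component F' x \<and> b \<notin> component F' x"
    using assms(2)
  proof (induction rule: rtranclp_induct)
    case (step y z)
    show ?case
    proof (cases "y \<in> component F' x")
      case True
      have "{y, z} \<notin> F'"
      proof
        assume "{y, z} \<in> F'"
        with step.hyps(2) have "adjacent F' y z"
          by (simp add: adjacent_def)
        with True step.prems show False
          by (auto simp: component_def intro: rtranclp.rtrancl_into_rtrancl)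
      qed
      with True step.hyps(2) step.prems show ?thesis
        by (auto simp: adjacent_def)
    qed (use step.IH in blast)
  qed simp
  with that show ?thesis
    by blast
qed

lemma component_finite_support:
  assumes "y \<in> component F x"
  obtains S where "S \<subseteq> F" "finite S" "y \<in> component S x"
proof -
  have "(adjacent F)\<^sup>*\<^sup>* x y"
    using assms by (simp add: component_def)
  then have "\<exists>S \<subseteq> F. finite S \<and> y \<in> component S x"
  proof (induction rule: rtranclp_induct)
    case (step y z)
    then obtain S where S: "S \<subseteq> F" "finite S" "y \<in> component S x"
      by blast
    have "adjacent (insert {y, z} S) y z"
      using step.hyps(2) by (simp add: adjacent_def)
    then have "z \<in> component (insert {y, z} S) y"
      by (simp add: component_def)
    moreover have "y \<in> component (insert {y, z} S) x"
      using S(3) component_mono[of S "insert {y, z} S"] by blast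
    ultimately have "z \<in> component (insert {y, z} S) x"
      by (rule component_trans[rotated])
    with S(1,2) step.hyps(2) show ?case
      by (intro exI[of _ "insert {y, z} S"]) (auto simp: adjacent_def)
  qed auto
  with that show ?thesis
    by blast
qed

lemma is_path_imp_in_component:
  assumes "is_path F p u w"
  shows "w \<in> component F u"
proof -
  have "(adjacent F)\<^sup>*\<^sup>* (hd q) (last q)"
    if "q \<noteq> []" "\<forall>i. Suc i < length q \<longrightarrow> adjacent F (q ! i) (q ! Suc i)" for q
    using that
  proof (induction q)
    case (Cons a q)
    show ?case
    proof (cases q)
      case (Cons b q')
      have "adjacent F a b"
        using Cons.prems(2)[rule_format, of 0] Cons by simp
      moreover have "(adjacent F)\<^sup>*\<^sup>* b (last q)"
        using Cons.IH Cons.prems(2) \<open>q = b # q'\<close> by fastforce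
      ultimately show ?thesis
        using Cons by (simp add: converse_rtranclp_into_rtranclp)
    qed simp
  qed simp
  moreover have "p \<noteq> []" "\<forall>i. Suc i < length p \<longrightarrow> adjacent F (p ! i) (p ! Suc i)"
    using assms by (auto simp: is_path_def adjacent_def nth_eq_iff_index_eq)
  ultimately show ?thesis
    using assms by (auto simp: component_def is_path_def)
qed

lemma in_component_imp_is_path:
  assumes "w \<in> component F u" and "u \<noteq> w"
  obtains p where "is_path F p u w"
proof -
  obtain xs where "rtrancl_path (adjacent F) u xs w"
    using assms(1) by (auto simp: component_def rtranclp_eq_rtrancl_path)
  then obtain ys where ys: "rtrancl_path (adjacent F) u ys w" "distinct (u # ys)"
    by (rule rtrancl_path_distinct)
  have "ys \<noteq> []"
    using ys(1) assms(2) by (auto elim: rtrancl_path.cases)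
  moreover have "{(u # ys) ! i, (u # ys) ! Suc i} \<in> F" if "Suc i < length (u # ys)" for i
    using rtrancl_path_nth[OF ys(1), of i] that by (simp add: adjacent_def)
  ultimately have "is_path F (u # ys) u w"
    using ys rtrancl_path_last[OF ys(1)] by (auto simp: is_path_def Suc_le_eq)
  with that show ?thesis .
qed

lemma simple_graph_edgeE:
  assumes "simple_graph V E" and "e \<in> E"
  obtains a b where "e = {a, b}" "a \<noteq> b" "a \<in> V" "b \<in> V"
  using assms unfolding simple_graph_def by blast

lemma simple_graph_edge_subset: "simple_graph V E \<Longrightarrow> e \<in> E \<Longrightarrow> e \<subseteq> V"
  by (elim simple_graph_edgeE) auto

lemma simple_graph_finite_edge: "simple_graph V E \<Longrightarrow> e \<in> E \<Longrightarrow> finite e"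
  by (elim simple_graph_edgeE) auto

lemma graph_connected_subset_component:
  assumes "graph_connected V F" and "x \<in> V"
  shows "V \<subseteq> component F x"
proof
  fix y assume "y \<in> V"
  show "y \<in> component F x"
  proof (cases "x = y")
    case False
    with assms \<open>y \<in> V\<close> obtain p where "is_path F p x y"
      unfolding graph_connected_def by blast
    then show ?thesis
      by (rule is_path_imp_in_component)
  qed simp
qed

lemma two_edge_connected_remove_edge:
  assumes "two_edge_connected V E"
  shows "graph_connected V (E - {g})"
proof (cases "g \<in> E")
  case True
  then have "{g} \<subseteq> E \<and> finite {g} \<and> card {g} < 2"
    by simp
  with assms show ?thesis
    unfolding two_edge_connected_def by blast
next
  case False
  with assms show ?thesis
    by (simp add: two_edge_connected_def)
qed

lemma infinite_component_not_isolated: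
  assumes "infinite (component F x)"
  shows "\<not> isolated F x"
proof -
  obtain y where "y \<in> component F x" "y \<noteq> x"
    using infinite_imp_nonempty[of "component F x - {x}"] assms by auto
  then obtain z where "adjacent F x z"
    by (auto simp: component_def elim: converse_rtranclpE)
  then show ?thesis
    by (auto simp: adjacent_def isolated_def)
qed

lemma missing_edge_meets_component:
  assumes "graph_connected V E" and "x \<in> V" and "\<not> V \<subseteq> component F x"
  obtains d p where "d \<in> E - F" "p \<in> d" "p \<in> component F x"
proof -
  obtain y where "y \<in> V" "y \<notin> component F x"
    using assms(3) by blast
  moreover have "y \<in> component E x"
    using graph_connected_subset_component[OF assms(1,2)] \<open>y \<in> V\<close> by blast
  ultimately obtain a b where "{a, b} \<in> E - F" "a \<in> component F x"
    by (meson component_boundary_edge)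
  with that show ?thesis
    by blast
qed

lemma finite_side_cut_edgeE:
  assumes "infinite (component F v)" and "finite (component (F - {g}) v)"
  obtains a b where "g = {a, b}" "adjacent F a b"
    "a \<in> component (F - {g}) v" "b \<notin> component (F - {g}) v"
proof -
  obtain y where "y \<in> component F v" "y \<notin> component (F - {g}) v"
    using infinite_imp_nonempty[of "component F v - component (F - {g}) v"] assms
    by (auto simp: Diff_infinite_finite)
  then obtain a b where "{a, b} \<in> F - (F - {g})"
      "a \<in> component (F - {g}) v" "b \<notin> component (F - {g}) v"
    by (rule component_boundary_edge)
  moreover from this have "a \<noteq> b"
    by auto
  ultimately show ?thesis
    using that by (auto simp: adjacent_def)
qed

definition safe :: "'a set set \<Rightarrow> 'a \<Rightarrow> bool" where
  "safe F v \<longleftrightarrow> (\<forall>g\<in>F. infinite (component (F - {g}) v))"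

lemma unsafe_vertex_bridgeE:
  assumes "simple_graph V E" and "two_edge_connected V E" and "infinite V"
    and "infinite (component (E - D) v)" and "\<not> safe (E - D) v"
  obtains g p q where "g \<in> E - D" "p \<in> \<Union>D" "q \<in> \<Union>D"
    "p \<in> component (E - D) v" "q \<in> component (E - D) v" "q \<notin> component (E - D - {g}) p"
    "\<exists>u\<in>g. v \<in> component (E - D - {g}) u \<and> finite (component (E - D - {g}) u)"
proof -
  define F where "F = E - D"
  obtain g where gF: "g \<in> F" and finA: "finite (component (F - {g}) v)"
    using assms(5) unfolding safe_def F_def by blast
  define A where "A = component (F - {g}) v"
  obtain a b where g: "g = {a, b}" and ab: "adjacent F a b" and aA: "a \<in> A" and bA: "b \<notin> A"
    using finite_side_cut_edgeE[OF assms(4)[folded F_def] finA] unfolding A_def .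
  have "a \<in> V" "b \<in> V"
    using simple_graph_edge_subset[OF assms(1), of g] gF g unfolding F_def by auto
  have conn: "graph_connected V (E - {g})"
    using assms(2) by (rule two_edge_connected_remove_edge)
  have missing: "E - {g} - (F - {g}) \<subseteq> D"
    unfolding F_def by blast
  have compA: "component (F - {g}) a = A"
    using aA unfolding A_def by (rule component_eq)
  with assms(3) finA have "\<not> V \<subseteq> component (F - {g}) a"
    unfolding A_def by (metis finite_subset)
  then obtain d p where "d \<in> D" "p \<in> d" and pA: "p \<in> A"
    using missing_edge_meets_component[OF conn \<open>a \<in> V\<close>] missing compA by blast
  then have pD: "p \<in> \<Union>D"
    by blast
  have "a \<notin> component (F - {g}) b"
    using bA compA component_sym[of a "F - {g}" b] by blast
  with \<open>a \<in> V\<close> have "\<not> V \<subseteq> component (F - {g}) b"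
    by blast
  then obtain d' q where "d' \<in> D" "q \<in> d'" and qB: "q \<in> component (F - {g}) b"
    using missing_edge_meets_component[OF conn \<open>b \<in> V\<close>] missing by blast
  then have qD: "q \<in> \<Union>D"
    by blast
  have sep: "q \<notin> component (F - {g}) p"
  proof
    assume "q \<in> component (F - {g}) p"
    moreover have "component (F - {g}) p = A"
      using pA unfolding A_def by (rule component_eq)
    ultimately have "b \<in> component (F - {g}) q" "component (F - {g}) q = A"
      using component_sym[OF qB] component_eq[of q "F - {g}" p] unfolding A_def by simp_all
    with bA show False
      by blast
  qed
  have AF: "A \<subseteq> component F v"
    unfolding A_def by (rule component_mono) blast
  have "b \<in> component F a" "q \<in> component F b"
    using ab qB component_mono[of "F - {g}" F] by (auto simp: component_def)
  then have qv: "q \<in> component F v"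
    using aA AF by (blast intro: component_trans)
  have "\<exists>u\<in>g. v \<in> component (F - {g}) u \<and> finite (component (F - {g}) u)"
    using g compA finA unfolding A_def by auto
  with gF pD qD pA AF qv sep show ?thesis
    unfolding F_def by (intro that) auto
qed

lemma finite_separating_edges:
  assumes "finite P" and "P \<subseteq> component F c"
  shows "finite {g. \<exists>p\<in>P. \<exists>q\<in>P. q \<notin> component (F - {g}) p}"
proof -
  have "\<exists>S. S \<subseteq> F \<and> finite S \<and> q \<in> component S p" if "p \<in> P" "q \<in> P" for p q
  proof -
    have "q \<in> component F p"
      using that assms(2) component_eq[of p F c] by auto
    then show ?thesis
      by (meson component_finite_support)
  qed
  then obtain S where S: "\<And>p q. p \<in> P \<Longrightarrow> q \<in> P \<Longrightarrow>
      S p q \<subseteq> F \<and> finite (S p q) \<and> q \<in> component (S p q) p"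
    by metis
  have "g \<in> S p q" if "p \<in> P" "q \<in> P" "q \<notin> component (F - {g}) p" for g p q
  proof (rule ccontr)
    assume "g \<notin> S p q"
    then have "S p q \<subseteq> F - {g}"
      using S[OF that(1,2)] by blast
    then have "component (S p q) p \<subseteq> component (F - {g}) p"
      by (rule component_mono)
    with S[OF that(1,2)] that(3) show False
      by blast
  qed
  then have "{g. \<exists>p\<in>P. \<exists>q\<in>P. q \<notin> component (F - {g}) p}
      \<subseteq> (\<Union>p\<in>P. \<Union>q\<in>P. S p q)"
    by blast
  moreover have "finite (\<Union>p\<in>P. \<Union>q\<in>P. S p q)"
    using assms(1) S by (simp add: finite_UN_I)
  ultimately show ?thesis
    by (rule finite_subset)
qed

lemma finite_unsafe_vertices:
  assumes "simple_graph V E" and "two_edge_connected V E" and "infinite V"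
    and "finite D" and "D \<subseteq> E" and "infinite (component (E - D) c)"
  shows "finite {v \<in> component (E - D) c. \<not> safe (E - D) v}"
proof -
  define K where "K = component (E - D) c"
  define P where "P = K \<inter> \<Union>D"
  have "finite (\<Union>D)"
    using assms(4) by (rule finite_Union)
      (use assms(5) simple_graph_finite_edge[OF assms(1)] in blast)
  then have "finite P"
    unfolding P_def by simp
  define G where "G = {g \<in> E - D. \<exists>p\<in>P. \<exists>q\<in>P. q \<notin> component (E - D - {g}) p}"
  have "finite G"
    using finite_separating_edges[OF \<open>finite P\<close>, of "E - D" c] unfolding G_def P_def K_def
    by (auto intro: finite_subset)
  define B where
    "B = (\<Union>g\<in>G. \<Union>u\<in>{u \<in> g. finite (component (E - D - {g}) u)}. component (E - D - {g}) u)"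
  have "finite B"
    unfolding B_def using \<open>finite G\<close> simple_graph_finite_edge[OF assms(1)]
    by (auto intro!: finite_UN_I simp: G_def)
  have "v \<in> B" if "v \<in> K" and unsafe: "\<not> safe (E - D) v" for v
  proof -
    have Kv: "component (E - D) v = K"
      using \<open>v \<in> K\<close> unfolding K_def by (rule component_eq)
    then have "infinite (component (E - D) v)"
      using assms(6) unfolding K_def by simp
    then obtain g p q where "g \<in> E - D" "p \<in> \<Union>D" "q \<in> \<Union>D"
      "p \<in> component (E - D) v" "q \<in> component (E - D) v" "q \<notin> component (E - D - {g}) p"
      and u: "\<exists>u\<in>g. v \<in> component (E - D - {g}) u \<and> finite (component (E - D - {g}) u)"
      by (rule unsafe_vertex_bridgeE[OF assms(1-3) _ unsafe])
    then have "g \<in> G"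
      unfolding G_def P_def Kv[symmetric] by blast
    with u show ?thesis
      unfolding B_def by blast
  qed
  then have "{v \<in> K. \<not> safe (E - D) v} \<subseteq> B"
    by blast
  with \<open>finite B\<close> show ?thesis
    unfolding K_def by (rule finite_subset[rotated])
qed

definition safe_move :: "'a set set \<Rightarrow> 'a \<Rightarrow> 'a" where
  "safe_move F c = (SOME c'. c' \<in> component F c \<and> c' \<noteq> c \<and> safe F c')"

lemma safe_move_spec:
  assumes "simple_graph V E" and "two_edge_connected V E" and "infinite V"
    and "finite D" and "D \<subseteq> E" and "infinite (component (E - D) c)"
  shows "safe_move (E - D) c \<in> component (E - D) c \<and> safe_move (E - D) c \<noteq> c
    \<and> safe (E - D) (safe_move (E - D) c)"
proof -
  have "infinite (component (E - D) c - {v \<in> component (E - D) c. \<not> safe (E - D) v} - {c})"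
    using finite_unsafe_vertices[OF assms] assms(6) by (simp add: Diff_infinite_finite)
  then obtain c' where "c' \<in> component (E - D) c - {v \<in> component (E - D) c. \<not> safe (E - D) v} - {c}"
    using ex_in_conv infinite_imp_nonempty by metis
  then have "c' \<in> component (E - D) c \<and> c' \<noteq> c \<and> safe (E - D) c'"
    by blast
  then show ?thesis
    unfolding safe_move_def by (rule someI)
qed

fun cat_response :: "'a set set \<times> 'a \<Rightarrow> 'a set \<Rightarrow> 'a set set \<times> 'a" where
  "cat_response (F, c) g = (F - {g}, safe_move (F - {g}) c)"

lemma fst_foldl_cat_response: "fst (foldl cat_response (F, c) gs) = F - set gs"
  by (induction gs arbitrary: F c) (simp_all add: set_diff_eq)

lemma snd_foldl_cat_response_snoc:
  "snd (foldl cat_response (F, c) (gs @ [g]))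
    = safe_move (F - set (gs @ [g])) (snd (foldl cat_response (F, c) gs))"
proof -
  obtain F' c' where state: "foldl cat_response (F, c) gs = (F', c')"
    by fastforce
  then have "F' = F - set gs"
    using fst_foldl_cat_response[of F c gs] by simp
  moreover have "F - set (gs @ [g]) = F - set gs - {g}"
    by auto
  ultimately show ?thesis
    using state by simp
qed

lemma safe_move_after_deletion:
  assumes "simple_graph V E" and "two_edge_connected V E" and "infinite V"
    and "finite D" and "D \<subseteq> E" and "g \<in> E - D" and "safe (E - D) c"
  shows "infinite (component (E - insert g D) c)"
    and "safe_move (E - insert g D) c \<in> component (E - insert g D) c"
    and "safe_move (E - insert g D) c \<noteq> c"
    and "safe (E - insert g D) (safe_move (E - insert g D) c)"
proof -
  have "E - insert g D = E - D - {g}"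
    by blast
  then show inf: "infinite (component (E - insert g D) c)"
    using assms(6,7) unfolding safe_def by simp
  show "safe_move (E - insert g D) c \<in> component (E - insert g D) c"
    and "safe_move (E - insert g D) c \<noteq> c"
    and "safe (E - insert g D) (safe_move (E - insert g D) c)"
    using safe_move_spec[OF assms(1-3) _ _ inf] assms(4-6) by simp_all
qed

lemma safe_foldl_cat_response:
  assumes "simple_graph V E" and "two_edge_connected V E" and "infinite V"
    and "safe E v0" and "set gs \<subseteq> E" and "distinct gs"
  shows "safe (E - set gs) (snd (foldl cat_response (E, v0) gs))"
  using assms(5,6)
proof (induction gs rule: rev_induct)
  case Nil
  then show ?case
    using assms(4) by simp
next
  case (snoc g gs)
  then have "safe (E - set gs) (snd (foldl cat_response (E, v0) gs))" "g \<in> E - set gs"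
    by auto
  from safe_move_after_deletion(4)[OF assms(1-3) _ _ this(2,1)] show ?case
    using snoc.prems snd_foldl_cat_response_snoc[of E v0 gs g] by simp
qed

lemma legal_deletions:
  assumes "\<forall>k\<le>n. h k \<in> E - h ` {..<k}"
  shows "set (map h [0..<Suc n]) \<subseteq> E" and "distinct (map h [0..<Suc n])"
proof -
  show "set (map h [0..<Suc n]) \<subseteq> E"
    using assms by auto
  have "h i \<noteq> h j" if "i < j" "j \<le> n" for i j
  proof -
    have "h j \<notin> h ` {..<j}"
      using assms that(2) by blast
    moreover have "h i \<in> h ` {..<j}"
      using that(1) by simp
    ultimately show ?thesis
      by metis
  qed
  then have "inj_on h {0..<Suc n}"
    by (intro inj_onI) (metis atLeastLessThan_iff less_Suc_eq_le linorder_neqE_nat)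
  then show "distinct (map h [0..<Suc n])"
    by (simp add: distinct_map del: upt_Suc)
qed

lemma two_edge_connected_safe:
  assumes "two_edge_connected V E" and "infinite V" and "v \<in> V"
  shows "safe E v"
  unfolding safe_def
proof
  fix g
  have "V \<subseteq> component (E - {g}) v"
    using two_edge_connected_remove_edge[OF assms(1)] assms(3)
    by (rule graph_connected_subset_component)
  then show "infinite (component (E - {g}) v)"
    using assms(2) finite_subset by blast
qed

lemma cat_response_round:
  assumes "simple_graph V E" and "two_edge_connected V E" and "infinite V" and "v0 \<in> V"
    and "set (gs @ [g]) \<subseteq> E" and "distinct (gs @ [g])"
  shows "\<not> isolated (E - set (gs @ [g])) (snd (foldl cat_response (E, v0) gs))"
    and "\<exists>p. is_path (E - set (gs @ [g])) p (snd (foldl cat_response (E, v0) gs))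
      (snd (foldl cat_response (E, v0) (gs @ [g])))"
proof -
  let ?c = "snd (foldl cat_response (E, v0) gs)"
  have "safe (E - set gs) ?c"
    using safe_foldl_cat_response[OF assms(1-3) two_edge_connected_safe[OF assms(2-4)]] assms(5,6)
    by simp
  moreover have "finite (set gs)" "set gs \<subseteq> E" "g \<in> E - set gs"
    using assms(5,6) by auto
  ultimately have step: "infinite (component (E - set (gs @ [g])) ?c)"
    "safe_move (E - set (gs @ [g])) ?c \<in> component (E - set (gs @ [g])) ?c"
    "?c \<noteq> safe_move (E - set (gs @ [g])) ?c"
    using safe_move_after_deletion[OF assms(1-3)] by (simp_all add: eq_commute)
  show "\<not> isolated (E - set (gs @ [g])) ?c"
    using step(1) by (rule infinite_component_not_isolated)
  obtain p where "is_path (E - set (gs @ [g])) p ?c (safe_move (E - set (gs @ [g])) ?c)"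
    using step(2,3) by (rule in_component_imp_is_path)
  then show "\<exists>p. is_path (E - set (gs @ [g])) p ?c (snd (foldl cat_response (E, v0) (gs @ [g])))"
    unfolding snd_foldl_cat_response_snoc by blast
qed

theorem mainTheorem13:
  fixes V :: "'a set" and E :: "'a set set"
  assumes "simple_graph V E" and "infinite V" and "two_edge_connected V E"
  shows "cat_win V E"
proof -
  obtain v0 where "v0 \<in> V"
    using infinite_imp_nonempty[OF assms(2)] by blast
  have "graph_connected V E"
    using assms(3) unfolding two_edge_connected_def by blast
  then have "V \<subseteq> component E v0"
    using \<open>v0 \<in> V\<close> by (rule graph_connected_subset_component)
  then have "\<not> isolated E v0"
    using assms(2) infinite_component_not_isolated by (metis finite_subset)
  define \<sigma> where "\<sigma> gs = snd (foldl cat_response (E, v0) gs)" for gs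
  have pos: "cat_pos v0 \<sigma> h n = \<sigma> (map h [0..<n])" for h n
    by (cases n) (simp_all add: \<sigma>_def)
  have "cat_winning_strategy V E v0 \<sigma>"
    unfolding cat_winning_strategy_def Let_def pos
  proof (intro conjI allI impI \<open>v0 \<in> V\<close> \<open>\<not> isolated E v0\<close>)
    fix h :: "nat \<Rightarrow> 'a set" and n :: nat
    assume legal: "\<forall>k\<le>n. h k \<in> E - h ` {..<k}"
    have split: "map h [0..<Suc n] = map h [0..<n] @ [h n]"
      by simp
    note round =
      cat_response_round[OF assms(1,3,2) \<open>v0 \<in> V\<close> legal_deletions[OF legal, unfolded split]]
    have "E - h ` {..n} = E - set (map h [0..<n] @ [h n])"
      by (auto simp: atLeast0LessThan le_less)
    with round show "\<not> isolated (E - h ` {..n}) (\<sigma> (map h [0..<n]))"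
      and "\<exists>p. is_path (E - h ` {..n}) p (\<sigma> (map h [0..<n])) (\<sigma> (map h [0..<Suc n]))"
      unfolding \<sigma>_def by simp_all
  qed
  then show ?thesis
    unfolding cat_win_def by blast
qed

end
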